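(* Let $f\in\mathbb{F}_2((T^{-1}))$ be the unique solution with $|f|<1$ of the equation $$X^4+X+\frac{T}{T^4+1}=0.$$ Then $\mu(f)=3$.
   Context: Fix a real $|T|>1$; the absolute value on $\mathbb{F}_2((T^{-1}))$ is $|g|=|T|^{-i_0}$ where $T^{-i_0}$ is the leading term of $g\ne0$, so $|P/Q|=|T|^{\deg P-\deg Q}$. (The equation has exactly one solution in $\{|g|<1\}$.) The irrationality exponent $\mu(f)$ is the supremum of real $\tau$ such that $|f-P/Q|<|Q|^{-\tau}$ has infinitely many solutions $(P,Q)\in\mathbb{F}_2[T]^2$, $Q\ne0$. *)

theory Defs
  imports Complex_Main "HOL-Library.Z2" "HOL-Library.Extended_Real"
    "HOL-Computational_Algebra.Formal_Laurent_Series"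
    "HOL-Computational_Algebra.Polynomial"
begin

text \<open>F_2((T^{-1})) is modelled as formal Laurent series over the field bit = F_2
  in the variable x = T^{-1}; hence T itself is fls_X_inv.\<close>

definition TT :: "bit fls" where
  "TT = fls_X_inv"

definition poly_fls :: "bit poly \<Rightarrow> bit fls" where
  "poly_fls P = poly (map_poly fls_const P) TT"

definition abs_T :: "real \<Rightarrow> bit fls \<Rightarrow> real" where
  "abs_T t g = (if g = 0 then 0 else t powr (- real_of_int (fls_subdegree g)))"

definition irrat_exp :: "real \<Rightarrow> bit fls \<Rightarrow> ereal" where
  "irrat_exp t f = Sup {ereal tau | tau.
     infinite {(P, Q). Q \<noteq> 0 \<and>
       abs_T t (f - poly_fls P / poly_fls Q) < abs_T t (poly_fls Q) powr (- tau)}}"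

end

theory Submission
  imports Defs "HOL-Computational_Algebra.Polynomial_Factorial"
begin

text \<open>
  Write v for fls_subdegree, so that |g| = t^(-v g). In characteristic 2 the map X \<mapsto> X^4 + X
  is additive, hence the solution is f = \<Sum>k. u^(4^k) with u = T/(T^4+1) = T/(T+1)^4 and v u = 3.
  Its partial sums P_n/Q_n have Q_n = (T+1)^(4^n) and v (f - P_n/Q_n) = 3*4^n = 3 deg Q_n,
  so \<mu>(f) \<ge> 3. Conversely, given P/Q with d = deg Q \<ge> 1, choose n with 4^n \<le> 2d < 4^(n+1).
  If P/Q = P_n/Q_n, then Q_n divides Q because T+1 does not divide P_n, so
  v (f - P/Q) = 3*4^n \<le> 3d. Otherwise v (P/Q - P_n/Q_n) \<le> d + 4^n < 3*4^n, and the
  ultrametric inequality gives v (f - P/Q) \<le> d + 4^n \<le> 3d. Hence |f - P/Q| \<ge> |Q|^(-3)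
  whenever deg Q \<ge> 1, and \<mu>(f) \<le> 3.
\<close>

unbundle fps_syntax

lemma char2_add_self:
  assumes "(1::'a::ring_1) + 1 = 0"
  shows "x + x = (0::'a)"
proof -
  have "x + x = (1 + 1) * x" by (simp only: distrib_right mult_1_left)
  with assms show ?thesis by simp
qed

lemma char2_minus_eq_self:
  assumes "(1::'a::ring_1) + 1 = 0"
  shows "- x = (x::'a)"
  using char2_add_self[OF assms] by (rule add.inverse_unique)

lemma char2_diff_eq_add:
  assumes "(1::'a::ring_1) + 1 = 0"
  shows "x - y = x + (y::'a)"
  using char2_minus_eq_self[OF assms, of y] by simp

lemma char2_add_power2:
  assumes "(1::'a::comm_ring_1) + 1 = 0"
  shows "(x + y) ^ 2 = x ^ 2 + (y::'a) ^ 2"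
proof -
  have "(x + y) ^ 2 = x ^ 2 + y ^ 2 + (x * y + x * y)"
    by (simp add: power2_eq_square algebra_simps)
  with char2_add_self[OF assms] show ?thesis by simp
qed

lemma char2_add_power4:
  assumes "(1::'a::comm_ring_1) + 1 = 0"
  shows "(x + y) ^ 4 = x ^ 4 + (y::'a) ^ 4"
proof -
  have power4: "z ^ 4 = (z ^ 2) ^ 2" for z :: 'a by (simp flip: power_mult)
  show ?thesis by (simp only: power4 char2_add_power2[OF assms])
qed

lemma bit_fls_one_add_one: "(1::bit fls) + 1 = 0"
proof -
  have "(1::bit) + 1 = 0" by simp
  then show ?thesis by (metis fls_const_1 fls_const_0 fls_plus_const)
qed

lemma poly_fls_pCons: "poly_fls (pCons a p) = fls_const a + TT * poly_fls p"
  by (simp add: poly_fls_def map_poly_pCons)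

lemma poly_fls_nth: "poly_fls p $$ k = (if k \<le> 0 then coeff p (nat (- k)) else 0)"
proof (induction p arbitrary: k)
  case 0
  then show ?case by (simp add: poly_fls_def)
next
  case (pCons a p)
  then show ?case
    by (auto simp: poly_fls_pCons TT_def fls_X_inv_times_conv_shift coeff_pCons nat_diff_distrib
        split: nat.split)
qed

lemma poly_fls_eq_iff [simp]: "poly_fls p = poly_fls q \<longleftrightarrow> p = q"
proof
  assume eq: "poly_fls p = poly_fls q"
  show "p = q"
  proof (rule poly_eqI)
    fix n
    show "coeff p n = coeff q n"
      using arg_cong[OF eq, of "\<lambda>g. g $$ (- int n)"] by (simp add: poly_fls_nth)
  qed
qed simp

lemma poly_fls_0 [simp]: "poly_fls 0 = 0"
  by (simp add: poly_fls_def)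

lemma poly_fls_eq_0_iff [simp]: "poly_fls p = 0 \<longleftrightarrow> p = 0"
  using poly_fls_eq_iff[of p 0] by simp

lemma poly_fls_1 [simp]: "poly_fls 1 = 1"
  by (simp add: poly_fls_def)

lemma poly_fls_add: "poly_fls (p + q) = poly_fls p + poly_fls q"
  by (rule fls_eqI) (simp add: poly_fls_nth)

lemma poly_fls_diff: "poly_fls (p - q) = poly_fls p - poly_fls q"
  by (rule fls_eqI) (simp add: poly_fls_nth)

lemma poly_fls_smult: "poly_fls (smult c p) = fls_const c * poly_fls p"
  by (induction p) (auto simp: poly_fls_pCons algebra_simps)

lemma poly_fls_mult: "poly_fls (p * q) = poly_fls p * poly_fls q"
  by (induction p) (auto simp: poly_fls_pCons algebra_simps poly_fls_add poly_fls_smult)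

lemma poly_fls_power: "poly_fls (p ^ n) = poly_fls p ^ n"
  by (induction n) (auto simp: poly_fls_mult)

lemma poly_fls_monom_1: "poly_fls [:0, 1:] = TT"
  by (simp add: poly_fls_pCons)

lemma fls_subdegree_poly_fls: "fls_subdegree (poly_fls p) = - int (degree p)"
proof (cases "p = 0")
  case False
  show ?thesis
  proof (rule fls_subdegree_eqI)
    show "poly_fls p $$ (- int (degree p)) \<noteq> 0"
      using False by (simp add: poly_fls_nth)
    show "poly_fls p $$ k = 0" if "k < - int (degree p)" for k
      using that by (simp add: poly_fls_nth coeff_eq_0)
  qed
qed simp

lemma fls_subdegree_diff_poly_fls:
  assumes "0 < fls_subdegree f" "P \<noteq> 0"
  shows "f \<noteq> poly_fls P \<and> fls_subdegree (f - poly_fls P) = - int (degree P)"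
proof -
  have less: "fls_subdegree (poly_fls P) < fls_subdegree f"
    using assms by (simp add: fls_subdegree_poly_fls)
  then show ?thesis
    using fls_subdegree_diff_eq2[OF _ less] assms(2) by (auto simp: fls_subdegree_poly_fls)
qed

lemma fls_subdegree_power4_add_self:
  fixes h :: "'a::field fls"
  assumes "0 < fls_subdegree h"
  shows "fls_subdegree (h ^ 4 + h) = fls_subdegree h"
proof -
  have "h \<noteq> 0" using assms by auto
  with assms show ?thesis
    by (intro fls_subdegree_add_eq2) (auto simp: fls_subdegree_pow)
qed

lemma abs_T_poly_fls: "Q \<noteq> 0 \<Longrightarrow> abs_T t (poly_fls Q) = t powr degree Q"
  by (simp add: abs_T_def fls_subdegree_poly_fls)

lemma abs_T_less_1_iff:
  assumes "1 < t"
  shows "abs_T t g < 1 \<longleftrightarrow> g = 0 \<or> 0 < fls_subdegree g"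
proof -
  have "t powr x < 1 \<longleftrightarrow> x < 0" for x
    using powr_less_cancel_iff[OF assms, of x 0] assms by simp
  then show ?thesis by (auto simp: abs_T_def)
qed

definition good_approximations :: "real \<Rightarrow> bit fls \<Rightarrow> real \<Rightarrow> (bit poly \<times> bit poly) set" where
  "good_approximations t f \<tau> = {(P, Q). Q \<noteq> 0 \<and>
     abs_T t (f - poly_fls P / poly_fls Q) < abs_T t (poly_fls Q) powr (- \<tau>)}"

lemma mem_good_approximations_iff:
  assumes "1 < t"
  shows "(P, Q) \<in> good_approximations t f \<tau> \<longleftrightarrow> Q \<noteq> 0 \<and>
    (f = poly_fls P / poly_fls Q \<or> \<tau> * degree Q < fls_subdegree (f - poly_fls P / poly_fls Q))"
proof (cases "Q = 0")
  case False
  have "abs_T t (poly_fls Q) powr (- \<tau>) = t powr (- (\<tau> * degree Q))"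
    using False by (simp add: abs_T_poly_fls powr_powr mult.commute)
  with assms show ?thesis
    by (auto simp: good_approximations_def abs_T_def)
qed (simp add: good_approximations_def)

lemma irrat_exp_eqI:
  assumes finite: "\<And>\<tau>. \<mu> < \<tau> \<Longrightarrow> finite (good_approximations t f \<tau>)"
    and infinite: "\<And>\<tau>. \<tau> < \<mu> \<Longrightarrow> infinite (good_approximations t f \<tau>)"
  shows "irrat_exp t f = \<mu>"
proof -
  let ?A = "{ereal \<tau> | \<tau>. infinite (good_approximations t f \<tau>)}"
  have "Sup ?A = \<mu>"
  proof (rule antisym)
    show "Sup ?A \<le> \<mu>"
      using finite by (intro Sup_least) (auto simp: not_less[symmetric])
    show "ereal \<mu> \<le> Sup ?A"
    proof (subst le_Sup_iff, intro allI impI)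
      fix y assume "y < ereal \<mu>"
      then obtain \<tau> where "y < ereal \<tau>" "\<tau> < \<mu>"
        using ereal_dense2 by fastforce
      then show "\<exists>a\<in>?A. y < a" using infinite by blast
    qed
  qed
  then show ?thesis
    by (simp add: irrat_exp_def good_approximations_def)
qed

definition u_T :: "bit fls" where
  "u_T = TT / (TT ^ 4 + 1)"

lemma u_T_eq: "u_T = poly_fls [:0, 1:] / poly_fls ([:1, 1:] ^ 4)"
proof -
  have "poly_fls ([:1, 1:] ^ 4) = (1 + TT) ^ 4"
    by (simp add: poly_fls_power poly_fls_pCons)
  also have "\<dots> = TT ^ 4 + 1"
    by (simp add: char2_add_power4[OF bit_fls_one_add_one] add.commute)
  finally show ?thesis
    by (simp add: u_T_def poly_fls_monom_1)
qed

lemma fls_subdegree_u_T: "fls_subdegree u_T = 3"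
  by (simp add: u_T_eq fls_divide_subdegree fls_subdegree_poly_fls degree_power_eq)

definition approx_den :: "nat \<Rightarrow> bit poly" where
  "approx_den n = [:1, 1:] ^ 4 ^ n"

text \<open>Since u^(4^n) = T^(4^n)/Q_n^4 and Q_(n+1) = Q_n^4, this makes
  P_(n+1)/Q_(n+1) = P_n/Q_n + u^(4^n).\<close>

fun approx_num :: "nat \<Rightarrow> bit poly" where
  "approx_num 0 = 0"
| "approx_num (Suc n) = approx_num n * approx_den n ^ 3 + [:0, 1:] ^ 4 ^ n"

definition approximant :: "nat \<Rightarrow> bit fls" where
  "approximant n = poly_fls (approx_num n) / poly_fls (approx_den n)"

lemma approx_den_nonzero [simp]: "approx_den n \<noteq> 0"
  by (simp add: approx_den_def)

lemma degree_approx_den: "degree (approx_den n) = 4 ^ n"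
  by (simp add: approx_den_def degree_power_eq)

lemma approximant_0: "approximant 0 = 0"
  by (simp add: approximant_def)

lemma approximant_Suc: "approximant (Suc n) = approximant n + u_T ^ 4 ^ n"
proof -
  define p q where "p = poly_fls (approx_num n)" and "q = poly_fls (approx_den n)"
  have "q \<noteq> 0" by (simp add: q_def)
  have "approx_den n ^ 4 = ([:1, 1:] ^ 4) ^ 4 ^ n"
    by (simp add: approx_den_def mult.commute flip: power_mult)
  then have q4: "poly_fls (approx_den n) ^ 4 = poly_fls ([:1, 1:] ^ 4) ^ 4 ^ n"
    by (simp flip: poly_fls_power)
  have "approximant (Suc n) = (p * q ^ 3 + TT ^ 4 ^ n) / q ^ 4"
    by (simp add: approximant_def p_def q_def poly_fls_add poly_fls_mult poly_fls_power
        poly_fls_monom_1 approx_den_def mult.commute flip: power_mult)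
  also have "\<dots> = p / q + TT ^ 4 ^ n / q ^ 4"
    using \<open>q \<noteq> 0\<close> by (simp add: field_simps power_eq_if)
  also have "\<dots> = approximant n + u_T ^ 4 ^ n"
    by (simp add: approximant_def p_def q_def q4 u_T_eq poly_fls_monom_1 power_divide)
  finally show ?thesis .
qed

lemma approximant_error_root:
  assumes f: "f ^ 4 + f + u_T = 0" "0 < fls_subdegree f"
  shows "(f - approximant n) ^ 4 + (f - approximant n) = u_T ^ 4 ^ n \<and>
         0 < fls_subdegree (f - approximant n)"
proof (induction n)
  case 0
  have "f ^ 4 + f = - u_T"
    using f(1) by (simp add: eq_neg_iff_add_eq_0)
  then show ?case
    using f(2) by (simp add: approximant_0 char2_minus_eq_self[OF bit_fls_one_add_one])
next
  case (Suc n)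
  define g w where "g = f - approximant n" and "w = u_T ^ 4 ^ n"
  have g: "g ^ 4 + g = w" "0 < fls_subdegree g"
    using Suc.IH by (simp_all add: g_def w_def)
  have w: "fls_subdegree w = 3 * 4 ^ n"
    using fls_subdegree_u_T by (simp add: w_def fls_subdegree_pow)
  have step: "f - approximant (Suc n) = g + w"
    by (simp add: approximant_Suc g_def w_def char2_diff_eq_add[OF bit_fls_one_add_one] algebra_simps)
  have "(g + w) ^ 4 + (g + w) = (g ^ 4 + g) + w + w ^ 4"
    by (simp add: char2_add_power4[OF bit_fls_one_add_one] algebra_simps)
  also have "\<dots> = w ^ 4"
    using g(1) char2_add_self[OF bit_fls_one_add_one, of w] by simp
  finally have eq: "(g + w) ^ 4 + (g + w) = u_T ^ 4 ^ Suc n"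
    by (simp add: w_def mult.commute flip: power_mult)
  have "g + w \<noteq> 0"
  proof
    assume "g + w = 0"
    with eq have "u_T ^ 4 ^ Suc n = 0" by simp
    with fls_subdegree_u_T show False by auto
  qed
  moreover have "0 < min (fls_subdegree g) (fls_subdegree w)"
    using g(2) w by simp
  ultimately have "0 < fls_subdegree (g + w)"
    using fls_plus_subdegree[of g w] by linarith
  with eq show ?case
    by (simp add: step)
qed

lemma fls_subdegree_approximant_error:
  assumes "f ^ 4 + f + u_T = 0" "0 < fls_subdegree f"
  shows "fls_subdegree (f - approximant n) = 3 * 4 ^ n"
  using approximant_error_root[OF assms, of n] fls_subdegree_power4_add_self[of "f - approximant n"]
    fls_subdegree_u_T
  by (simp add: fls_subdegree_pow)

lemma linear_not_dvd_approx_num: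
  assumes "0 < n"
  shows "\<not> [:1, 1:] dvd approx_num n"
proof -
  obtain m where n: "n = Suc m"
    using assms by (cases n) auto
  have "poly (approx_den m) 1 = 0"
    by (simp add: approx_den_def)
  then have "poly (approx_num n) (- 1) \<noteq> 0"
    by (simp add: n)
  then show ?thesis
    by (simp add: dvd_iff_poly_eq_0)
qed

lemma approx_den_dvd_of_eq_approximant:
  assumes "poly_fls P / poly_fls Q = approximant n" "Q \<noteq> 0" "0 < n"
  shows "approx_den n dvd Q"
proof -
  have "poly_fls (P * approx_den n) = poly_fls (approx_num n * Q)"
    using assms(1,2) by (simp add: approximant_def poly_fls_mult frac_eq_eq)
  then have "[:1, 1:] ^ 4 ^ n dvd approx_num n * Q"
    unfolding approx_den_def by (metis dvd_triv_right poly_fls_eq_iff)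
  moreover have "prime_elem [:1, 1 :: bit:]"
    by (rule prime_elem_linear_field_poly) simp
  ultimately show ?thesis
    unfolding approx_den_def
    by (metis prime_power_dvd_multD linear_not_dvd_approx_num[OF assms(3)] zero_less_numeral zero_less_power)
qed

lemma fls_subdegree_poly_fls_fraction_diff_le:
  assumes "Q \<noteq> 0" "Q' \<noteq> 0"
  shows "fls_subdegree (poly_fls P / poly_fls Q - poly_fls P' / poly_fls Q')
           \<le> int (degree Q) + int (degree Q')"
proof -
  have "poly_fls P / poly_fls Q - poly_fls P' / poly_fls Q' =
          poly_fls (P * Q' - P' * Q) / poly_fls (Q * Q')"
    using assms by (simp add: poly_fls_mult poly_fls_diff field_simps)
  then show ?thesis
    using assms by (cases "P * Q' - P' * Q = 0")
      (simp_all add: fls_divide_subdegree fls_subdegree_poly_fls degree_mult_eq)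
qed

lemma fls_subdegree_fraction_error_le:
  assumes f: "f ^ 4 + f + u_T = 0" "0 < fls_subdegree f" and d: "0 < degree Q"
  shows "f \<noteq> poly_fls P / poly_fls Q \<and>
         fls_subdegree (f - poly_fls P / poly_fls Q) \<le> 3 * int (degree Q)"
proof -
  define r where "r = poly_fls P / poly_fls Q"
  have "Q \<noteq> 0" using d by auto
  obtain n where n: "4 ^ n \<le> 2 * degree Q" "2 * degree Q < 4 ^ Suc n"
    using ex_power_ivl1[of 4 "2 * degree Q"] d by auto
  have err: "fls_subdegree (f - approximant n) = 3 * 4 ^ n"
    by (rule fls_subdegree_approximant_error[OF f])
  show ?thesis
  proof (cases "r = approximant n")
    case True
    have "4 ^ n \<le> degree Q"
    proof (cases "n = 0")
      case False
      then have "approx_den n dvd Q"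
        using True \<open>Q \<noteq> 0\<close> by (simp add: r_def approx_den_dvd_of_eq_approximant)
      with \<open>Q \<noteq> 0\<close> show ?thesis
        by (metis degree_approx_den dvd_imp_degree_le)
    qed (use d in simp)
    then show ?thesis
      using True err by (auto simp flip: r_def)
  next
    case False
    have far: "fls_subdegree (r - approximant n) \<le> int (degree Q) + 4 ^ n"
      using fls_subdegree_poly_fls_fraction_diff_le[OF \<open>Q \<noteq> 0\<close> approx_den_nonzero]
      by (simp add: r_def approximant_def degree_approx_den)
    have "int (degree Q) + 4 ^ n < 3 * 4 ^ n"
      using n(2) of_nat_less_iff[of "degree Q" "2 * 4 ^ n", where 'a = int] by simp
    with far err have less: "fls_subdegree (r - approximant n) < fls_subdegree (f - approximant n)"
      by linarith
    have "f - r = (f - approximant n) - (r - approximant n)"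
      by simp
    then have "fls_subdegree (f - r) = fls_subdegree (r - approximant n)"
      using fls_subdegree_diff_eq2[OF _ less] False by simp
    moreover have "f \<noteq> r"
      using less by auto
    moreover have "int (degree Q) + 4 ^ n \<le> 3 * int (degree Q)"
      using n(1) of_nat_le_iff[of "4 ^ n" "2 * degree Q", where 'a = int] by simp
    ultimately show ?thesis
      using far by (simp add: r_def)
  qed
qed

lemma finite_good_approximations:
  assumes t: "1 < t" and f: "f ^ 4 + f + u_T = 0" "0 < fls_subdegree f" and "3 < \<tau>"
  shows "finite (good_approximations t f \<tau>)"
proof (rule finite_subset)
  show "good_approximations t f \<tau> \<subseteq> {(0, 1)}"
  proof clarify
    fix P Q
    assume "(P, Q) \<in> good_approximations t f \<tau>"
    then have "Q \<noteq> 0" and close: "f = poly_fls P / poly_fls Q \<or>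
        \<tau> * degree Q < fls_subdegree (f - poly_fls P / poly_fls Q)"
      by (simp_all add: mem_good_approximations_iff[OF t])
    have "degree Q = 0"
    proof (rule ccontr)
      assume "degree Q \<noteq> 0"
      then have "f \<noteq> poly_fls P / poly_fls Q"
        and "fls_subdegree (f - poly_fls P / poly_fls Q) \<le> 3 * int (degree Q)"
        using fls_subdegree_fraction_error_le[OF f, of Q P] by auto
      moreover have "3 * real (degree Q) < \<tau> * degree Q"
        using \<open>3 < \<tau>\<close> \<open>degree Q \<noteq> 0\<close> by simp
      ultimately show False
        using close by linarith
    qed
    then obtain c where "Q = [:c:]"
      by (rule degree_eq_zeroE)
    with \<open>Q \<noteq> 0\<close> have "Q = 1"
      by (cases c) (simp_all add: one_pCons)
    have "P = 0"
      using fls_subdegree_diff_poly_fls[OF f(2), of P] close \<open>Q = 1\<close> by fastforce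
    with \<open>Q = 1\<close> show "P = 0 \<and> Q = 1" by simp
  qed
qed simp

lemma infinite_good_approximations:
  assumes t: "1 < t" and f: "f ^ 4 + f + u_T = 0" "0 < fls_subdegree f" and "\<tau> < 3"
  shows "infinite (good_approximations t f \<tau>)"
proof -
  have "inj (\<lambda>n. (approx_num n, approx_den n))"
  proof (rule injI)
    fix m n
    assume "(approx_num m, approx_den m) = (approx_num n, approx_den n)"
    then have "(4::nat) ^ m = 4 ^ n"
      by (metis degree_approx_den prod.inject)
    then show "m = n"
      by simp
  qed
  moreover have "(approx_num n, approx_den n) \<in> good_approximations t f \<tau>" for n
  proof -
    have "\<tau> * 4 ^ n < 3 * 4 ^ n"
      using \<open>\<tau> < 3\<close> by simp
    then show ?thesis
      using fls_subdegree_approximant_error[OF f, of n]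
      by (simp add: mem_good_approximations_iff[OF t] degree_approx_den approximant_def)
  qed
  then have "range (\<lambda>n. (approx_num n, approx_den n)) \<subseteq> good_approximations t f \<tau>"
    by blast
  ultimately show ?thesis
    using range_inj_infinite infinite_super by blast
qed

theorem proposition5p2:
  fixes t :: real and f :: "bit fls"
  assumes "t > 1"
    and "f ^ 4 + f + TT / (TT ^ 4 + 1) = 0"
    and "abs_T t f < 1"
  shows "irrat_exp t f = 3"
proof -
  have f: "f ^ 4 + f + u_T = 0"
    using assms(2) by (simp add: u_T_def)
  then have "f \<noteq> 0"
    using fls_subdegree_u_T by auto
  then have "0 < fls_subdegree f"
    using assms(1,3) abs_T_less_1_iff by blast
  then have "irrat_exp t f = ereal 3"
    using assms(1) f finite_good_approximations infinite_good_approximations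
    by (intro irrat_exp_eqI)
  then show ?thesis
    by simp
qed

end
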